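(* Let $\mathfrak{q}$ be an $n\times n$ quantum parameter matrix over a field $k$ and $V$ a $k$-vector space with basis $v_1,\dots,v_n$. There exists an injective group homomorphism $\iota:\mathrm{Stab}(\mathfrak{q})\to\mathrm{Aut}_{\mathrm{gr}}(S_{\mathfrak{q}}(V))$ such that for each $\sigma\in\mathrm{Stab}(\mathfrak{q})$, $\iota(\sigma)$ lies in $\prod_{B\in\mathcal{B}_{\mathfrak{q}}}\mathrm{Hom}(V_B,V_{\sigma(B)})$, i.e. $\iota(\sigma)$ maps $V_B$ to $V_{\sigma(B)}$ for every block $B$ of $\mathfrak{q}$.
   Context: An $n\times n$ quantum parameter matrix is a matrix $\mathfrak{q}=(q_{ij})$ over $k$ with $q_{ii}=1$ and $q_{ij}q_{ji}=1$ for all $i,j$. $S_{\mathfrak{q}}(V)$ is the $k$-algebra generated by $v_1,\dots,v_n$ with relations $v_jv_i=q_{ij}v_iv_j$, graded by $\deg v_i=1$; $\mathrm{Aut}_{\mathrm{gr}}(S_{\mathfrak{q}}(V))$ is the group of degree-preserving algebra automorphisms, viewed as a subgroup of $\mathrm{GL}(V)$ by restriction. $\mathcal{B}_{\mathfrak{q}}$ is the partition of $[n]$ with $i\sim j$ iff rows $i,j$ of $\mathfrak{q}$ are identical; its classes are the blocks. $V_B=\mathrm{span}\{v_i:i\in B\}$ and $\mathfrak{q}_{BC}=(q_{ij})_{i\in B,j\in C}$. With $r=|\mathcal{B}_{\mathfrak{q}}|$, $\mathfrak{S}_r$ permutes the blocks, and $\mathrm{Stab}(\mathfrak{q})=\{\sigma\in\mathfrak{S}_r:|\sigma(B)|=|B|\text{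 and }\mathfrak{q}_{BC}=\mathfrak{q}_{\sigma(B)\sigma(C)}\text{ for all blocks }B,C\}$. *)

theory Defs
  imports "HOL-Combinatorics.Permutations"
begin

text \<open>Basis vectors v_i of V are indexed by a finite linearly ordered type 'n
  (the order is the order v_1 < ... < v_n, used to identify submatrices).
  A linear map g : V \<rightarrow> V is a matrix g :: 'n \<Rightarrow> 'n \<Rightarrow> 'k with
  g(v_i) = sum_j g j i v_j.\<close>

definition qpm :: "('n \<Rightarrow> 'n \<Rightarrow> 'k::field) \<Rightarrow> bool" where
  "qpm q \<longleftrightarrow> (\<forall>i. q i i = 1) \<and> (\<forall>i j. q i j * q j i = 1)"

definition mat_mult :: "('n::finite \<Rightarrow> 'n \<Rightarrow> 'k::field) \<Rightarrow> ('n \<Rightarrow> 'n \<Rightarrow> 'k) \<Rightarrow> 'n \<Rightarrow> 'n \<Rightarrow> 'k" where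
  "mat_mult g h = (\<lambda>j i. \<Sum>l\<in>UNIV. g j l * h l i)"

subsection \<open>Free algebra k<v_1,...,v_n> : finitely supported functions on words\<close>

definition FA :: "('n list \<Rightarrow> 'k::field) set" where
  "FA = {f. finite {w. f w \<noteq> 0}}"

definition wd :: "'n list \<Rightarrow> 'n list \<Rightarrow> 'k::field" where
  "wd u = (\<lambda>w. if w = u then 1 else 0)"

definition fa_mult :: "('n list \<Rightarrow> 'k::field) \<Rightarrow> ('n list \<Rightarrow> 'k) \<Rightarrow> 'n list \<Rightarrow> 'k" where
  "fa_mult f g = (\<lambda>w. \<Sum>i\<le>length w. f (take i w) * g (drop i w))"

inductive_set qideal :: "('n \<Rightarrow> 'n \<Rightarrow> 'k::field) \<Rightarrow> ('n list \<Rightarrow> 'k) set" for q where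
  rel: "(\<lambda>w. wd [j, i] w - q i j * wd [i, j] w) \<in> qideal q"
| zero: "(\<lambda>w. 0) \<in> qideal q"
| add: "a \<in> qideal q \<Longrightarrow> b \<in> qideal q \<Longrightarrow> (\<lambda>w. a w + b w) \<in> qideal q"
| smult: "a \<in> qideal q \<Longrightarrow> (\<lambda>w. c * a w) \<in> qideal q"
| lmult: "a \<in> qideal q \<Longrightarrow> u \<in> FA \<Longrightarrow> fa_mult u a \<in> qideal q"
| rmult: "a \<in> qideal q \<Longrightarrow> u \<in> FA \<Longrightarrow> fa_mult a u \<in> qideal q"

text \<open>The algebra endomorphism of the free algebra extending the linear map g
  (v_i \<mapsto> sum_j g j i v_j); it is degree preserving.\<close>
definition fa_ext :: "('n \<Rightarrow> 'n \<Rightarrow> 'k::field) \<Rightarrow> ('n list \<Rightarrow> 'k) \<Rightarrow> 'n list \<Rightarrow> 'k" where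
  "fa_ext g f = (\<lambda>u. \<Sum>w\<in>{w. f w \<noteq> 0 \<and> length w = length u}.
                       f w * (\<Prod>t<length u. g (u ! t) (w ! t)))"

text \<open>Aut_gr(S_q(V)) as a subset of GL(V): those linear maps g whose extension
  to the free algebra descends to S_q(V) = free algebra / qideal q and
  induces a bijection there (i.e. a graded algebra automorphism restricting to g).
  Every graded automorphism of S_q(V) arises this way from its restriction to V.\<close>
definition Aut_gr :: "('n \<Rightarrow> 'n \<Rightarrow> 'k::field) \<Rightarrow> ('n \<Rightarrow> 'n \<Rightarrow> 'k) set" where
  "Aut_gr q = {g. (\<forall>a\<in>qideal q. fa_ext g a \<in> qideal q)
      \<and> (\<forall>b\<in>FA. fa_ext g b \<in> qideal q \<longrightarrow> b \<in> qideal q)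
      \<and> (\<forall>a\<in>FA. \<exists>b\<in>FA. (\<lambda>w. fa_ext g b w - a w) \<in> qideal q)}"

definition blk :: "('n \<Rightarrow> 'n \<Rightarrow> 'k) \<Rightarrow> 'n \<Rightarrow> 'n set" where
  "blk q i = {j. \<forall>l. q j l = q i l}"

definition Blocks :: "('n \<Rightarrow> 'n \<Rightarrow> 'k) \<Rightarrow> 'n set set" where
  "Blocks q = range (blk q)"

text \<open>q_BC = q_{sigma B, sigma C}, matrices indexed in increasing order.\<close>
definition Stab :: "('n::{finite,linorder} \<Rightarrow> 'n \<Rightarrow> 'k) \<Rightarrow> ('n set \<Rightarrow> 'n set) set" where
  "Stab q = {\<sigma>. \<sigma> permutes Blocks q
     \<and> (\<forall>B\<in>Blocks q. card (\<sigma> B) = card B)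
     \<and> (\<forall>B\<in>Blocks q. \<forall>C\<in>Blocks q. \<forall>a<card B. \<forall>b<card C.
          q (sorted_list_of_set B ! a) (sorted_list_of_set C ! b)
          = q (sorted_list_of_set (\<sigma> B) ! a) (sorted_list_of_set (\<sigma> C) ! b))}"

end

theory Submission
  imports Defs
begin

text \<open>A permutation \<sigma> in the stabiliser lifts to a permutation \<pi> of the basis indices
  mapping each block B order-preservingly onto \<sigma>(B). The condition q_BC = q_\<sigma>(B)\<sigma>(C)
  says exactly that q(\<pi> i, \<pi> j) = q(i, j), so the permutation matrix of \<pi> maps the
  defining relations of S_q(V) onto defining relations and is a graded automorphism.
  The lift is compatible with composition and determines \<sigma>, which gives the
  homomorphism property and injectivity.\<close>

definition rank :: "'a::linorder set \<Rightarrow> 'a \<Rightarrow> nat" where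
  "rank A = the_inv_into {..<card A} ((!) (sorted_list_of_set A))"

lemma bij_betw_nth_sorted_list_of_set:
  "finite A \<Longrightarrow> bij_betw ((!) (sorted_list_of_set A)) {..<card A} A"
  by (rule bij_betw_nth) simp_all

lemma rank_less_card: "finite A \<Longrightarrow> x \<in> A \<Longrightarrow> rank A x < card A"
  unfolding rank_def
  using bij_betw_the_inv_into[OF bij_betw_nth_sorted_list_of_set] by (metis bij_betwE lessThan_iff)

lemma nth_sorted_list_of_set_rank:
  "finite A \<Longrightarrow> x \<in> A \<Longrightarrow> sorted_list_of_set A ! rank A x = x"
  unfolding rank_def by (metis bij_betw_nth_sorted_list_of_set f_the_inv_into_f_bij_betw)

lemma rank_nth_sorted_list_of_set:
  "finite A \<Longrightarrow> a < card A \<Longrightarrow> rank A (sorted_list_of_set A ! a) = a"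
  unfolding rank_def
  by (metis bij_betw_imp_inj_on bij_betw_nth_sorted_list_of_set lessThan_iff the_inv_into_f_f)

definition block_perm :: "('n::{finite,linorder} \<Rightarrow> 'n \<Rightarrow> 'k) \<Rightarrow> ('n set \<Rightarrow> 'n set) \<Rightarrow> 'n \<Rightarrow> 'n" where
  "block_perm q \<sigma> i = sorted_list_of_set (\<sigma> (blk q i)) ! rank (blk q i) i"

lemma blk_self: "i \<in> blk q i"
  by (simp add: blk_def)

lemma blk_in_Blocks: "blk q i \<in> Blocks q"
  by (simp add: Blocks_def)

lemma blk_eq: "B \<in> Blocks q \<Longrightarrow> i \<in> B \<Longrightarrow> blk q i = B"
  by (auto simp: Blocks_def blk_def)

lemma Stab_permutes: "\<sigma> \<in> Stab q \<Longrightarrow> \<sigma> permutes Blocks q"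
  by (simp add: Stab_def)

lemma card_Stab_image: "\<sigma> \<in> Stab q \<Longrightarrow> B \<in> Blocks q \<Longrightarrow> card (\<sigma> B) = card B"
  by (simp add: Stab_def)

lemma rank_blk_less: "rank (blk q i) i < card (blk (q :: 'n::{finite,linorder} \<Rightarrow> _) i)"
  by (simp add: rank_less_card blk_self)

lemma block_perm_in_image:
  assumes "\<sigma> \<in> Stab q"
  shows "block_perm q \<sigma> i \<in> \<sigma> (blk q i)"
  unfolding block_perm_def
  using rank_blk_less[of q i] card_Stab_image[OF assms blk_in_Blocks]
  by (metis nth_mem length_sorted_list_of_set set_sorted_list_of_set finite)

lemma blk_block_perm:
  assumes "\<sigma> \<in> Stab q"
  shows "blk q (block_perm q \<sigma> i) = \<sigma> (blk q i)"
  using assms blk_in_Blocks block_perm_in_image blk_eq permutes_in_image Stab_permutes by metis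

lemma rank_block_perm:
  assumes "\<sigma> \<in> Stab q"
  shows "rank (\<sigma> (blk q i)) (block_perm q \<sigma> i) = rank (blk q i) i"
  unfolding block_perm_def
  using rank_blk_less[of q i] card_Stab_image[OF assms blk_in_Blocks]
  by (metis finite rank_nth_sorted_list_of_set)

lemma block_perm_comp:
  assumes "\<sigma> \<in> Stab q" "\<tau> \<in> Stab q"
  shows "block_perm q (\<sigma> \<circ> \<tau>) = block_perm q \<sigma> \<circ> block_perm q \<tau>"
  by (rule ext) (simp add: block_perm_def[of q \<sigma>] blk_block_perm[OF assms(2)]
      rank_block_perm[OF assms(2)], simp add: block_perm_def)

lemma block_perm_preserves_q:
  assumes "\<sigma> \<in> Stab q"
  shows "q (block_perm q \<sigma> i) (block_perm q \<sigma> j) = q i j"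
proof -
  let ?l = sorted_list_of_set
  have "q (?l (blk q i) ! rank (blk q i) i) (?l (blk q j) ! rank (blk q j) j)
      = q (?l (\<sigma> (blk q i)) ! rank (blk q i) i) (?l (\<sigma> (blk q j)) ! rank (blk q j) j)"
    using assms rank_blk_less[of q i] rank_blk_less[of q j] blk_in_Blocks[of q i] blk_in_Blocks[of q j]
    unfolding Stab_def by simp
  then show ?thesis
    by (simp add: block_perm_def nth_sorted_list_of_set_rank blk_self)
qed

lemma inj_block_perm:
  assumes "\<sigma> \<in> Stab q"
  shows "inj (block_perm q \<sigma>)"
proof (rule injI)
  fix i j assume eq: "block_perm q \<sigma> i = block_perm q \<sigma> j"
  then have "\<sigma> (blk q i) = \<sigma> (blk q j)"
    by (metis blk_block_perm[OF assms])
  then have blk_ij: "blk q i = blk q j"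
    using permutes_inj[OF Stab_permutes[OF assms]] by (simp add: inj_eq)
  then have "rank (blk q i) i = rank (blk q i) j"
    by (metis eq rank_block_perm[OF assms])
  then show "i = j"
    by (metis blk_ij blk_self finite nth_sorted_list_of_set_rank)
qed

lemma bij_block_perm: "\<sigma> \<in> Stab q \<Longrightarrow> bij (block_perm q \<sigma>)"
  by (simp add: bij_def inj_block_perm finite_UNIV_inj_surj)

lemma inj_on_block_perm: "inj_on (block_perm q) (Stab q)"
proof (rule inj_onI, rule ext)
  fix \<sigma> \<tau> B
  assume \<sigma>: "\<sigma> \<in> Stab q" and \<tau>: "\<tau> \<in> Stab q" and eq: "block_perm q \<sigma> = block_perm q \<tau>"
  show "\<sigma> B = \<tau> B"
  proof (cases "B \<in> Blocks q")
    case True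
    then obtain i where "B = blk q i" by (auto simp: Blocks_def)
    then show ?thesis by (metis eq blk_block_perm \<sigma> \<tau>)
  next
    case False
    then show ?thesis by (metis permutes_not_in Stab_permutes \<sigma> \<tau>)
  qed
qed

definition perm_mat :: "('n \<Rightarrow> 'n) \<Rightarrow> 'n \<Rightarrow> 'n \<Rightarrow> 'k::field" where
  "perm_mat \<pi> = (\<lambda>j i. if j = \<pi> i then 1 else 0)"

lemma perm_mat_comp: "perm_mat (\<pi> \<circ> \<rho>) = mat_mult (perm_mat \<pi>) (perm_mat \<rho>)"
proof (intro ext)
  fix j i
  have "mat_mult (perm_mat \<pi>) (perm_mat \<rho>) j i = (\<Sum>l\<in>UNIV. if l = \<rho> i then perm_mat \<pi> j l else 0)"
    unfolding mat_mult_def by (intro sum.cong) (simp_all add: perm_mat_def)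
  also have "\<dots> = perm_mat (\<pi> \<circ> \<rho>) j i"
    by (simp add: perm_mat_def)
  finally show "perm_mat (\<pi> \<circ> \<rho>) j i = mat_mult (perm_mat \<pi>) (perm_mat \<rho>) j i" ..
qed

lemma inj_perm_mat: "inj (perm_mat :: ('n \<Rightarrow> 'n) \<Rightarrow> 'n \<Rightarrow> 'n \<Rightarrow> 'k::field)"
proof (rule injI, rule ext)
  fix \<pi> \<rho> :: "'n \<Rightarrow> 'n" and i
  assume "(perm_mat \<pi> :: 'n \<Rightarrow> 'n \<Rightarrow> 'k) = perm_mat \<rho>"
  then have "(perm_mat \<pi> (\<pi> i) i :: 'k) = perm_mat \<rho> (\<pi> i) i" by simp
  then show "\<pi> i = \<rho> i" by (simp add: perm_mat_def split: if_splits)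
qed

lemma fa_ext_perm_mat:
  fixes f :: "'n::finite list \<Rightarrow> 'k::field"
  assumes "bij \<pi>"
  shows "fa_ext (perm_mat \<pi>) f = (\<lambda>u. f (map (inv \<pi>) u))"
proof
  fix u :: "'n list"
  define S where "S = {w. f w \<noteq> 0 \<and> length w = length u}"
  have "finite S"
    by (rule finite_subset[OF _ finite_lists_length_eq[of UNIV "length u"]]) (auto simp: S_def)
  have term_eq: "f w * (\<Prod>t<length u. perm_mat \<pi> (u ! t) (w ! t))
      = (if w = map (inv \<pi>) u then f w else 0)" if "w \<in> S" for w
  proof (cases "w = map (inv \<pi>) u")
    case True
    then show ?thesis by (simp add: perm_mat_def bij_is_surj[OF assms] surj_f_inv_f)
  next
    case False
    with that obtain t where "t < length u" "w ! t \<noteq> inv \<pi> (u ! t)"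
      by (auto simp: S_def list_eq_iff_nth_eq)
    then have "(\<Prod>t<length u. perm_mat \<pi> (u ! t) (w ! t)) = (0::'k)"
      by (auto simp: perm_mat_def prod_zero_iff bij_is_inj[OF assms] inv_f_f intro!: bexI[of _ t])
    then show ?thesis using False by simp
  qed
  have "fa_ext (perm_mat \<pi>) f u = (\<Sum>w\<in>S. if w = map (inv \<pi>) u then f w else 0)"
    unfolding fa_ext_def S_def[symmetric] using term_eq by (rule sum.cong[OF refl])
  also have "\<dots> = f (map (inv \<pi>) u)"
    using \<open>finite S\<close> by (simp add: sum.delta' S_def)
  finally show "fa_ext (perm_mat \<pi>) f u = f (map (inv \<pi>) u)" .
qed

lemma FA_comp_map:
  assumes "inj \<rho>" "u \<in> FA"
  shows "(\<lambda>w. u (map \<rho> w)) \<in> FA"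
proof -
  have "finite (map \<rho> -` {w. u w \<noteq> 0})"
    using assms by (intro finite_vimageI) (simp_all add: FA_def inj_mapI)
  then show ?thesis by (simp add: FA_def vimage_def)
qed

lemma qideal_comp_map:
  assumes "bij \<rho>" and q_\<rho>: "\<And>i j. q (\<rho> i) (\<rho> j) = q i j" and "a \<in> qideal q"
  shows "(\<lambda>w. a (map \<rho> w)) \<in> qideal q"
  using \<open>a \<in> qideal q\<close>
proof (induction rule: qideal.induct)
  case (rel j i)
  have wd_map: "wd [x, y] (map \<rho> w) = (wd [inv \<rho> x, inv \<rho> y] w :: 'b)" for x y w
    using bij_inv_eq_iff[OF assms(1)] by (auto simp: wd_def)
  have "q i j = q (inv \<rho> i) (inv \<rho> j)"
    using q_\<rho>[of "inv \<rho> i" "inv \<rho> j"] by (simp add: bij_is_surj[OF assms(1)] surj_f_inv_f)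
  then show ?case by (simp add: wd_map qideal.rel)
next
  case zero
  show ?case by (rule qideal.zero)
next
  case (add a b)
  from add.IH show ?case by (rule qideal.add)
next
  case (smult a c)
  from smult.IH show ?case by (rule qideal.smult)
next
  case (lmult a u)
  have "(\<lambda>w. fa_mult u a (map \<rho> w)) = fa_mult (\<lambda>w. u (map \<rho> w)) (\<lambda>w. a (map \<rho> w))"
    by (simp add: fa_mult_def take_map drop_map)
  then show ?case
    using lmult FA_comp_map bij_is_inj[OF assms(1)] qideal.lmult by metis
next
  case (rmult a u)
  have "(\<lambda>w. fa_mult a u (map \<rho> w)) = fa_mult (\<lambda>w. a (map \<rho> w)) (\<lambda>w. u (map \<rho> w))"
    by (simp add: fa_mult_def take_map drop_map)
  then show ?case
    using rmult FA_comp_map bij_is_inj[OF assms(1)] qideal.rmult by metis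
qed

lemma perm_mat_in_Aut_gr:
  fixes q :: "'n::finite \<Rightarrow> 'n \<Rightarrow> 'k::field"
  assumes \<pi>: "bij \<pi>" and q_\<pi>: "\<And>i j. q (\<pi> i) (\<pi> j) = q i j"
  shows "perm_mat \<pi> \<in> Aut_gr q"
proof -
  have \<pi>_inv: "\<pi> (inv \<pi> i) = i" "inv \<pi> (\<pi> i) = i" for i
    by (simp_all add: surj_f_inv_f[OF bij_is_surj[OF \<pi>]] inv_f_f[OF bij_is_inj[OF \<pi>]])
  have inv_\<pi>: "bij (inv \<pi>)"
    by (rule bij_imp_bij_inv[OF \<pi>])
  have q_inv_\<pi>: "q (inv \<pi> i) (inv \<pi> j) = q i j" for i j
    using q_\<pi>[of "inv \<pi> i" "inv \<pi> j"] by (simp add: \<pi>_inv)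
  have ext: "fa_ext (perm_mat \<pi>) f = (\<lambda>u. f (map (inv \<pi>) u))" for f :: "'n list \<Rightarrow> 'k"
    by (rule fa_ext_perm_mat[OF \<pi>])
  have "fa_ext (perm_mat \<pi>) a \<in> qideal q" if "a \<in> qideal q" for a
    unfolding ext by (rule qideal_comp_map[OF inv_\<pi> q_inv_\<pi> that])
  moreover have "b \<in> qideal q" if "fa_ext (perm_mat \<pi>) b \<in> qideal q" for b
    using qideal_comp_map[OF \<pi> q_\<pi> that[unfolded ext]] by (simp add: \<pi>_inv comp_def)
  moreover have "\<exists>b\<in>FA. (\<lambda>w. fa_ext (perm_mat \<pi>) b w - a w) \<in> qideal q" if "a \<in> FA" for a
  proof
    show "(\<lambda>w. a (map \<pi> w)) \<in> FA"
      by (rule FA_comp_map[OF bij_is_inj[OF \<pi>] that])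
    show "(\<lambda>w. fa_ext (perm_mat \<pi>) (\<lambda>w. a (map \<pi> w)) w - a w) \<in> qideal q"
      using qideal.zero by (simp add: ext \<pi>_inv comp_def)
  qed
  ultimately show ?thesis
    unfolding Aut_gr_def by blast
qed

theorem lemma2p5:
  fixes q :: "'n::{finite,linorder} \<Rightarrow> 'n \<Rightarrow> 'k::field"
  assumes "qpm q"
  shows "\<exists>\<iota> :: ('n set \<Rightarrow> 'n set) \<Rightarrow> ('n \<Rightarrow> 'n \<Rightarrow> 'k).
           (\<forall>\<sigma>\<in>Stab q. \<iota> \<sigma> \<in> Aut_gr q)
         \<and> (\<forall>\<sigma>\<in>Stab q. \<forall>\<tau>\<in>Stab q. \<iota> (\<sigma> \<circ> \<tau>) = mat_mult (\<iota> \<sigma>) (\<iota> \<tau>))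
         \<and> inj_on \<iota> (Stab q)
         \<and> (\<forall>\<sigma>\<in>Stab q. \<forall>B\<in>Blocks q. \<forall>i\<in>B. \<forall>j. j \<notin> \<sigma> B \<longrightarrow> \<iota> \<sigma> j i = 0)"
proof (intro exI[of _ "\<lambda>\<sigma>. perm_mat (block_perm q \<sigma>)"] conjI ballI allI impI)
  fix \<sigma> assume "\<sigma> \<in> Stab q"
  then show "perm_mat (block_perm q \<sigma>) \<in> Aut_gr q"
    by (intro perm_mat_in_Aut_gr bij_block_perm block_perm_preserves_q)
next
  fix \<sigma> \<tau> assume "\<sigma> \<in> Stab q" "\<tau> \<in> Stab q"
  then show "perm_mat (block_perm q (\<sigma> \<circ> \<tau>))
      = mat_mult (perm_mat (block_perm q \<sigma>)) (perm_mat (block_perm q \<tau>) :: 'n \<Rightarrow> 'n \<Rightarrow> 'k)"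
    by (simp add: block_perm_comp perm_mat_comp)
next
  show "inj_on (\<lambda>\<sigma>. perm_mat (block_perm q \<sigma>) :: 'n \<Rightarrow> 'n \<Rightarrow> 'k) (Stab q)"
    using comp_inj_on[OF inj_on_block_perm inj_on_subset[OF inj_perm_mat]] by (simp add: comp_def)
next
  fix \<sigma> B i j assume "\<sigma> \<in> Stab q" "B \<in> Blocks q" "i \<in> B" "j \<notin> \<sigma> B"
  then show "perm_mat (block_perm q \<sigma>) j i = 0"
    by (metis block_perm_in_image blk_eq perm_mat_def)
qed

end
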